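(* In the Simon urn described in the context, with fixed trigger probability $p\in(0,1)$, for all $n\ge1$, $$\mathbb E[K_{n,1}]=\frac{\Gamma(n+1-p)}{\Gamma(2-p)\,\Gamma(n)},$$ and, as $n\to\infty$, $$\mathbb E[K_{n,1}]=\frac{n^{1-p}}{\Gamma(2-p)}+O\!\left(\frac{1}{n^{p}}\right).$$
   Context: Simon urn. The urn is empty at time $0$. Let $B_0=1$ and let $(B_n)_{n\ge1}$ be i.i.d. Bernoulli random variables with $\Pr(B_n=1)=p\in(0,1)$, independent of everything else. Colors are labelled $1,2,\dots$ in order of first appearance. At each time $n\ge1$: if $B_{n-1}=1$, one ball of a new color is added and registered; if $B_{n-1}=0$, a ball is drawn uniformly at random from the urn, its color is registered, and one additional ball of that color is added. $K_{n,c}$ denotes the number of times color $c$ has been registered up to and including time $n$ (equal to the number of balls of color $c$ at time $n$). $\Gamma$ is the gamma function. *)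

theory Defs
  imports "HOL-Probability.Probability" "HOL-Library.Landau_Symbols"
begin

text \<open>The state at time n is the list of colours of the balls in
the urn in order of insertion (so it has length n).  Colours are labelled
1, 2, ... in order of first appearance, so a new colour is card (set u) + 1.
At time Suc n the trigger B_n is used: B_0 = 1 deterministically, and for
n \<ge> 1, B_n is Bernoulli(p), independent of the past.\<close>

fun simon_urn :: "real \<Rightarrow> nat \<Rightarrow> nat list pmf" where
  "simon_urn p 0 = return_pmf []"
| "simon_urn p (Suc n) =
     do { u \<leftarrow> simon_urn p n;
          b \<leftarrow> (if n = 0 then return_pmf True else bernoulli_pmf p);
          if b then return_pmf (u @ [Suc (card (set u))])
          else map_pmf (\<lambda>i. u @ [u ! i]) (pmf_of_set {..<length u}) }"

definition K :: "nat list \<Rightarrow> nat \<Rightarrow> nat" where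
  "K u c = count (mset u) c"

end

theory Submission
  imports Defs
begin

text \<open>Given the urn at a time n \<ge> 1, the trigger is 1 with probability p (a new colour, so
K_{n,1} is unchanged) and 0 with probability 1 - p, in which case a ball of colour 1 is drawn with
probability K_{n,1}/n.  Hence E K_{n+1,1} = (1 + (1 - p)/n) E K_{n,1}, and since K_{1,1} = 1 the
product telescopes to the Gamma quotient.  For the asymptotics, log-convexity of Gamma gives
Wendel's inequalities x (x + s) powr (s - 1) \<le> Gamma (x + s) / Gamma x \<le> x powr s for
0 \<le> s \<le> 1, whose two sides differ by at most s x powr (s - 1); take s = 1 - p.\<close>

definition simon_step :: "real \<Rightarrow> nat list \<Rightarrow> nat list pmf" where
  "simon_step p u =
     bernoulli_pmf p \<bind> (\<lambda>b. if b then return_pmf (u @ [Suc (card (set u))])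
                             else map_pmf (\<lambda>i. u @ [u ! i]) (pmf_of_set {..<length u}))"

lemma simon_urn_Suc_eq_bind_step:
  "n \<noteq> 0 \<Longrightarrow> simon_urn p (Suc n) = simon_urn p n \<bind> simon_step p"
  by (simp add: simon_step_def[abs_def])

lemma length_simon_urn: "u \<in> set_pmf (simon_urn p n) \<Longrightarrow> length u = n"
  by (induction n arbitrary: u) (auto simp: set_bind_pmf split: if_splits)

lemma finite_set_pmf_simon_step: "u \<noteq> [] \<Longrightarrow> finite (set_pmf (simon_step p u))"
  by (auto simp: simon_step_def set_pmf_of_set lessThan_empty_iff)

lemma finite_set_pmf_simon_urn: "finite (set_pmf (simon_urn p n))"
proof (induction n)
  case (Suc n)
  show ?case
  proof (cases "n = 0")
    case False
    then show ?thesis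
      unfolding simon_urn_Suc_eq_bind_step[OF False] set_bind_pmf
      using Suc by (auto intro!: finite_set_pmf_simon_step dest!: length_simon_urn)
  qed (simp add: bind_return_pmf)
qed simp

lemma sum_of_bool_nth_eq_count:
  "(\<Sum>i<length u. of_bool (u ! i = c) :: real) = real (count (mset u) c)"
  by (induction u rule: rev_induct) (auto simp: nth_append)

lemma expectation_K_draw:
  assumes "u \<noteq> []"
  shows "measure_pmf.expectation (pmf_of_set {..<length u}) (\<lambda>i. real (K (u @ [u ! i]) c))
           = real (K u c) * (1 + 1 / length u)"
proof -
  have "measure_pmf.expectation (pmf_of_set {..<length u}) (\<lambda>i. real (K (u @ [u ! i]) c))
          = (\<Sum>i<length u. real (K u c) + of_bool (u ! i = c)) / length u"
    using assms by (subst integral_pmf_of_set) (auto simp: K_def intro!: sum.cong)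
  also have "\<dots> = real (K u c) * (1 + 1 / length u)"
    using assms by (simp add: sum.distrib sum_of_bool_nth_eq_count K_def field_simps)
  finally show ?thesis .
qed

lemma expectation_K_simon_step:
  assumes "u \<noteq> []" "c \<noteq> Suc (card (set u))" "0 \<le> p" "p \<le> 1"
  shows "measure_pmf.expectation (simon_step p u) (\<lambda>v. real (K v c))
           = real (K u c) * (1 + (1 - p) / length u)"
proof -
  have "measure_pmf.expectation (simon_step p u) (\<lambda>v. real (K v c))
          = p * real (K u c)
            + (1 - p) * measure_pmf.expectation (pmf_of_set {..<length u})
                          (\<lambda>i. real (K (u @ [u ! i]) c))"
    unfolding simon_step_def using assms
    by (subst pmf_expectation_bind[of UNIV])
       (auto simp: UNIV_bool K_def set_pmf_of_set lessThan_empty_iff)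
  then show ?thesis
    using assms by (simp add: expectation_K_draw field_simps)
qed

lemma expectation_K1_simon_urn_Suc:
  assumes "n \<noteq> 0" "0 \<le> p" "p \<le> 1"
  shows "measure_pmf.expectation (simon_urn p (Suc n)) (\<lambda>u. real (K u 1))
           = measure_pmf.expectation (simon_urn p n) (\<lambda>u. real (K u 1)) * (1 + (1 - p) / n)"
proof -
  let ?A = "set_pmf (simon_urn p n)"
  have step: "measure_pmf.expectation (simon_step p u) (\<lambda>v. real (K v 1))
                = real (K u 1) * (1 + (1 - p) / n)" if "u \<in> ?A" for u
    using assms length_simon_urn[OF that]
    by (subst expectation_K_simon_step) (auto simp: card_gt_0_iff)
  have nonempty: "u \<noteq> []" if "u \<in> ?A" for u
    using assms length_simon_urn[OF that] by auto
  have "measure_pmf.expectation (simon_urn p (Suc n)) (\<lambda>u. real (K u 1))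
          = (\<Sum>u\<in>?A. pmf (simon_urn p n) u
                         * measure_pmf.expectation (simon_step p u) (\<lambda>v. real (K v 1)))"
    unfolding simon_urn_Suc_eq_bind_step[OF \<open>n \<noteq> 0\<close>]
    using finite_set_pmf_simon_urn finite_set_pmf_simon_step nonempty
    by (subst pmf_expectation_bind[of ?A]) auto
  also have "\<dots> = (\<Sum>u\<in>?A. pmf (simon_urn p n) u * real (K u 1)) * (1 + (1 - p) / n)"
    unfolding sum_distrib_right by (intro sum.cong refl) (simp only: step mult.assoc)
  also have "\<dots> = measure_pmf.expectation (simon_urn p n) (\<lambda>u. real (K u 1))
                    * (1 + (1 - p) / n)"
    by (subst integral_measure_pmf[of ?A]) (auto simp: finite_set_pmf_simon_urn)
  finally show ?thesis .
qed

lemma Gamma_real_plus1: "(x::real) > 0 \<Longrightarrow> Gamma (x + 1) = x * Gamma x"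
  by (rule Gamma_plus1) (auto dest: nonpos_Ints_nonpos)

lemma expectation_K1_simon_urn:
  assumes "0 \<le> p" "p \<le> 1" "n \<ge> 1"
  shows "measure_pmf.expectation (simon_urn p n) (\<lambda>u. real (K u 1))
           = Gamma (real n + 1 - p) / (Gamma (2 - p) * Gamma (real n))"
  using \<open>n \<ge> 1\<close>
proof (induction n rule: nat_induct_at_least)
  case base
  have "Gamma (2 - p) > 0"
    using assms by (intro Gamma_real_pos) linarith
  then show ?case
    by (simp add: K_def bind_return_pmf)
next
  case (Suc n)
  have "measure_pmf.expectation (simon_urn p (Suc n)) (\<lambda>u. real (K u 1))
          = measure_pmf.expectation (simon_urn p n) (\<lambda>u. real (K u 1)) * (1 + (1 - p) / n)"
    using Suc.hyps assms by (intro expectation_K1_simon_urn_Suc) auto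
  also have "\<dots> = (real n + 1 - p) * Gamma (real n + 1 - p)
                    / (Gamma (2 - p) * (real n * Gamma n))"
    using Suc.IH Suc.hyps by (simp add: field_simps)
  also have "\<dots> = Gamma (real (Suc n) + 1 - p) / (Gamma (2 - p) * Gamma (real (Suc n)))"
  proof -
    have "Gamma (real (Suc n) + 1 - p) = (real n + 1 - p) * Gamma (real n + 1 - p)"
      using Gamma_real_plus1[of "real n + 1 - p"] assms Suc.hyps by (simp add: algebra_simps)
    moreover have "Gamma (real (Suc n)) = real n * Gamma (real n)"
      using Gamma_real_plus1[of "real n"] Suc.hyps by (simp add: add.commute)
    ultimately show ?thesis
      by (simp only:)
  qed
  finally show ?case .
qed

lemma Gamma_plus_le_powr_mult_Gamma:
  assumes x: "(x::real) > 0" and s: "0 \<le> s" "s \<le> 1"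
  shows "Gamma (x + s) \<le> x powr s * Gamma x"
proof -
  have "ln (Gamma ((1 - s) *\<^sub>R x + s *\<^sub>R (x + 1)))
          \<le> (1 - s) * ln (Gamma x) + s * ln (Gamma (x + 1))"
    using convex_onD[OF log_convex_Gamma_real, of s x "x + 1"] x s by auto
  also have "\<dots> = (1 - s) * ln (Gamma x) + s * (ln x + ln (Gamma x))"
    using x by (simp add: Gamma_real_plus1 ln_mult_pos)
  also have "\<dots> = ln (x powr s * Gamma x)"
    using x by (simp add: ln_mult_pos ln_powr algebra_simps)
  finally have "ln (Gamma (x + s)) \<le> ln (x powr s * Gamma x)"
    by (simp add: algebra_simps)
  then show ?thesis
    using x s by simp
qed

lemma Gamma_quotient_powr_error:
  assumes x: "(x::real) > 0" and s: "0 \<le> s" "s \<le> 1"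
  shows "\<bar>Gamma (x + s) / Gamma x - x powr s\<bar> \<le> s * x powr (s - 1)"
proof -
  have xs: "x + s > 0"
    using x s by linarith
  have upper: "Gamma (x + s) / Gamma x \<le> x powr s"
    using Gamma_plus_le_powr_mult_Gamma[OF x s] x by (simp add: divide_le_eq)
  \<comment> \<open>the lower half: apply the upper half at x + s with increment 1 - s\<close>
  have "x * Gamma x \<le> (x + s) powr (1 - s) * Gamma (x + s)"
    using Gamma_plus_le_powr_mult_Gamma[OF xs, of "1 - s"] s Gamma_real_plus1[OF x]
    by (simp add: algebra_simps)
  then have "x * Gamma x * (x + s) powr (s - 1)
               \<le> (x + s) powr (1 - s) * Gamma (x + s) * (x + s) powr (s - 1)"
    by (rule mult_right_mono) simp
  also have "\<dots> = (x + s) powr (1 - s) * (x + s) powr (s - 1) * Gamma (x + s)"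
    by (simp add: ac_simps)
  also have "\<dots> = Gamma (x + s)"
    using xs by (simp add: powr_add[symmetric])
  finally have lower: "x * (x + s) powr (s - 1) \<le> Gamma (x + s) / Gamma x"
    using x by (simp add: le_divide_eq ac_simps)
  have "x powr s * (x / (x + s)) = x powr s * ((x + s) / x) powr (- 1)"
    using x xs by (simp add: powr_minus_divide)
  also have "\<dots> \<le> x powr s * ((x + s) / x) powr (s - 1)"
    using x s by (intro mult_left_mono powr_mono) auto
  also have "\<dots> = x * (x + s) powr (s - 1)"
    using x xs by (simp add: powr_divide powr_diff)
  finally have "x powr s - x * (x + s) powr (s - 1) \<le> x powr s * (s / (x + s))"
    using xs by (simp add: field_simps)
  also have "\<dots> \<le> x powr s * (s / x)"
    using x s by (intro mult_left_mono divide_left_mono) auto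
  also have "\<dots> = s * x powr (s - 1)"
    using x by (simp add: powr_diff)
  finally show ?thesis
    using upper lower s x by (simp add: abs_le_iff)
qed

lemma expectation_K1_simon_urn_error:
  assumes "0 \<le> p" "p \<le> 1" "n \<ge> 1"
  shows "\<bar>measure_pmf.expectation (simon_urn p n) (\<lambda>u. real (K u 1))
            - real n powr (1 - p) / Gamma (2 - p)\<bar>
           \<le> (1 - p) / Gamma (2 - p) * (1 / real n powr p)"
proof -
  have gamma2: "Gamma (2 - p) > 0"
    using assms by (intro Gamma_real_pos) linarith
  have bound: "\<bar>Gamma (real n + 1 - p) / Gamma (real n) - real n powr (1 - p)\<bar>
                 \<le> (1 - p) * (1 / real n powr p)"
    using Gamma_quotient_powr_error[of "real n" "1 - p"] assms
    by (simp add: powr_minus_divide add_diff_eq)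
  have "measure_pmf.expectation (simon_urn p n) (\<lambda>u. real (K u 1))
          - real n powr (1 - p) / Gamma (2 - p)
          = (Gamma (real n + 1 - p) / Gamma (real n) - real n powr (1 - p)) / Gamma (2 - p)"
    using expectation_K1_simon_urn[OF assms] by (simp add: diff_divide_distrib mult.commute)
  then have "\<bar>measure_pmf.expectation (simon_urn p n) (\<lambda>u. real (K u 1))
               - real n powr (1 - p) / Gamma (2 - p)\<bar>
              = \<bar>Gamma (real n + 1 - p) / Gamma (real n) - real n powr (1 - p)\<bar>
                  / Gamma (2 - p)"
    using gamma2 by (simp add: abs_divide)
  also have "\<dots> \<le> (1 - p) * (1 / real n powr p) / Gamma (2 - p)"
    using bound gamma2 by (intro divide_right_mono) auto
  finally show ?thesis
    by (simp add: mult.commute)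
qed

theorem corollary4p1:
  fixes p :: real
  assumes "0 < p" and "p < 1"
  shows "(\<forall>n::nat. n \<ge> 1 \<longrightarrow>
            measure_pmf.expectation (simon_urn p n) (\<lambda>u. real (K u 1))
              = Gamma (real n + 1 - p) / (Gamma (2 - p) * Gamma (real n)))
      \<and> (\<lambda>n::nat. measure_pmf.expectation (simon_urn p n) (\<lambda>u. real (K u 1))
                   - real n powr (1 - p) / Gamma (2 - p))
          \<in> O(\<lambda>n. 1 / real n powr p)"
proof
  show "\<forall>n::nat. n \<ge> 1 \<longrightarrow>
          measure_pmf.expectation (simon_urn p n) (\<lambda>u. real (K u 1))
            = Gamma (real n + 1 - p) / (Gamma (2 - p) * Gamma (real n))"
    using assms by (intro allI impI expectation_K1_simon_urn) auto
  have "eventually (\<lambda>n.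
          norm (measure_pmf.expectation (simon_urn p n) (\<lambda>u. real (K u 1))
                - real n powr (1 - p) / Gamma (2 - p))
            \<le> (1 - p) / Gamma (2 - p) * norm (1 / real n powr p)) at_top"
    using eventually_ge_at_top[of "1::nat"]
    by eventually_elim (use assms expectation_K1_simon_urn_error in auto)
  then show "(\<lambda>n::nat. measure_pmf.expectation (simon_urn p n) (\<lambda>u. real (K u 1))
               - real n powr (1 - p) / Gamma (2 - p)) \<in> O(\<lambda>n. 1 / real n powr p)"
    by (rule bigoI)
qed

end
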